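(* Let $m\ge 2$ and let $\mathcal{R}_m^4$ be the rose graph with $N_m=3m+1$ nodes. The partial mean hitting time to the hub node is $$T_{\mathrm H}^{\mathrm T}=\frac{10}{3}$$ for the traditional unbiased random walk (TURW), $$T_{\mathrm H}^{\mathrm B}=\frac43+\frac{2\sqrt{2m-1}}{m}=\frac43+\frac{2\sqrt{6N_m-15}}{N_m-1}$$ for the NBCRW, and $$T_{\mathrm H}^{\mathrm M}=\frac43+\frac{2}{m}=\frac43+\frac{6}{N_m-1}$$ for the MERW.
   Context: The rose graph $\mathcal{R}_m^4$ ($m\ge2$) is obtained by gluing $m$ cycles of length 4 at a single common node, the hub; it has $3m+1$ nodes. Let $\mathbf{A}=(a_{ij})$ be the adjacency matrix and $d_i$ the degrees. TURW: $p_{ij}=a_{ij}/d_i$. MERW: with $\lambda_1$ the largest eigenvalue of $\mathbf{A}$ and $\psi_1$ the positive unit eigenvector, $p_{ij}=\frac{a_{ij}}{\lambda_1}\frac{\psi_{1j}}{\psi_{1i}}$. NBCRW: the non-backtracking matrix $\mathbf{B}$ is indexed by directed edges $i\to j$ (two per undirected edge) with $B_{i\to j,k\to l}=1$ if $j=k$ and $i\ne l$, else $0$; $v$ is a non-negative eigenvector for its leading (Perron–Frobenius) eigenvalue; $x_i=\sum_{j\in\mathcal{N}_i}v_{i\to j}$; and $p_{ij}=a_{ij}x_j/\sum_k a_{ik}x_k$. For a random walk, the hitting time $T_{ij}$ is the expected number of steps to first reach $j$ starting from $i$ ($T_{jj}=0$), and the partial mean hitting time to $j$ is $T_j=\frac{1}{N-1}\sum_{i}T_{ij}$,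 $N$ the number of nodes. *)

theory Defs
  imports Complex_Main
begin

text \<open>Nodes are 0..3m; node 0 is the hub; petal k (k < m) is the 4-cycle
  0 - 3k+1 - 3k+2 - 3k+3 - 0.\<close>

definition rose_nodes :: "nat \<Rightarrow> nat set" where
  "rose_nodes m = {0..3*m}"

definition rose_edge :: "nat \<Rightarrow> nat \<Rightarrow> nat \<Rightarrow> bool" where
  "rose_edge m i j \<longleftrightarrow> (\<exists>k<m. {i,j} = {0, 3*k+1} \<or> {i,j} = {3*k+1, 3*k+2}
      \<or> {i,j} = {3*k+2, 3*k+3} \<or> {i,j} = {3*k+3, 0})"

definition rose_adj :: "nat \<Rightarrow> nat \<Rightarrow> nat \<Rightarrow> real" where
  "rose_adj m i j = (if rose_edge m i j then 1 else 0)"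

definition hub :: nat where "hub = 0"

definition degree :: "'v set \<Rightarrow> ('v \<Rightarrow> 'v \<Rightarrow> real) \<Rightarrow> 'v \<Rightarrow> real" where
  "degree V a i = (\<Sum>k\<in>V. a i k)"

definition real_eigenvalue :: "'v set \<Rightarrow> ('v \<Rightarrow> 'v \<Rightarrow> real) \<Rightarrow> real \<Rightarrow> bool" where
  "real_eigenvalue V M \<mu> \<longleftrightarrow> (\<exists>x. (\<exists>i\<in>V. x i \<noteq> 0) \<and> (\<forall>i\<in>V. (\<Sum>j\<in>V. M i j * x j) = \<mu> * x i))"

definition complex_eigenvalue :: "'v set \<Rightarrow> ('v \<Rightarrow> 'v \<Rightarrow> real) \<Rightarrow> complex \<Rightarrow> bool" where
  "complex_eigenvalue V M \<mu> \<longleftrightarrow> (\<exists>x. (\<exists>i\<in>V. x i \<noteq> 0) \<and>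
      (\<forall>i\<in>V. (\<Sum>j\<in>V. complex_of_real (M i j) * x j) = \<mu> * x i))"

definition largest_eigenvalue :: "'v set \<Rightarrow> ('v \<Rightarrow> 'v \<Rightarrow> real) \<Rightarrow> real" where
  "largest_eigenvalue V M = Max {\<mu>. real_eigenvalue V M \<mu>}"

definition pf_eigenvalue :: "'v set \<Rightarrow> ('v \<Rightarrow> 'v \<Rightarrow> real) \<Rightarrow> real" where
  "pf_eigenvalue V M = Max (cmod ` {\<mu>. complex_eigenvalue V M \<mu>})"

definition turw :: "'v set \<Rightarrow> ('v \<Rightarrow> 'v \<Rightarrow> real) \<Rightarrow> 'v \<Rightarrow> 'v \<Rightarrow> real" where
  "turw V a i j = a i j / degree V a i"

definition merw :: "'v set \<Rightarrow> ('v \<Rightarrow> 'v \<Rightarrow> real) \<Rightarrow> ('v \<Rightarrow> real) \<Rightarrow> 'v \<Rightarrow> 'v \<Rightarrow> real" where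
  "merw V a \<psi> i j = a i j / largest_eigenvalue V a * (\<psi> j / \<psi> i)"

definition dir_edges :: "'v set \<Rightarrow> ('v \<Rightarrow> 'v \<Rightarrow> real) \<Rightarrow> ('v \<times> 'v) set" where
  "dir_edges V a = {(i,j). i \<in> V \<and> j \<in> V \<and> a i j \<noteq> 0}"

definition nb_matrix :: "('v \<times> 'v) \<Rightarrow> ('v \<times> 'v) \<Rightarrow> real" where
  "nb_matrix e f = (if snd e = fst f \<and> fst e \<noteq> snd f then 1 else 0)"

definition nbc_x :: "'v set \<Rightarrow> ('v \<Rightarrow> 'v \<Rightarrow> real) \<Rightarrow> ('v \<times> 'v \<Rightarrow> real) \<Rightarrow> 'v \<Rightarrow> real" where
  "nbc_x V a v i = (\<Sum>j\<in>{j\<in>V. a i j \<noteq> 0}. v (i,j))"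

definition nbcrw :: "'v set \<Rightarrow> ('v \<Rightarrow> 'v \<Rightarrow> real) \<Rightarrow> ('v \<times> 'v \<Rightarrow> real) \<Rightarrow> 'v \<Rightarrow> 'v \<Rightarrow> real" where
  "nbcrw V a v i j = a i j * nbc_x V a v j / (\<Sum>k\<in>V. a i k * nbc_x V a v k)"

text \<open>first_hit V P j i n: probability that the walk with transition matrix P started at i
  first reaches j at step n.\<close>
fun first_hit :: "'v set \<Rightarrow> ('v \<Rightarrow> 'v \<Rightarrow> real) \<Rightarrow> 'v \<Rightarrow> 'v \<Rightarrow> nat \<Rightarrow> real" where
  "first_hit V P j i 0 = (if i = j then 1 else 0)"
| "first_hit V P j i (Suc n) = (if i = j then 0 else (\<Sum>k\<in>V. P i k * first_hit V P j k n))"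

definition hitting_time :: "'v set \<Rightarrow> ('v \<Rightarrow> 'v \<Rightarrow> real) \<Rightarrow> 'v \<Rightarrow> 'v \<Rightarrow> real" where
  "hitting_time V P i j = (\<Sum>n. real n * first_hit V P j i n)"

definition partial_mean_hitting_time :: "'v set \<Rightarrow> ('v \<Rightarrow> 'v \<Rightarrow> real) \<Rightarrow> 'v \<Rightarrow> real" where
  "partial_mean_hitting_time V P j = (\<Sum>i\<in>V. hitting_time V P i j) / (real (card V) - 1)"

end

(*
  Every vertex other than the hub lies on a petal a - b - c (the nodes 3q+1, 3q+2, 3q+3 of
  petal q) with a and c adjacent to the hub.
  For each of the three walks the transition probabilities are symmetric within the petals:
  from a or c the walk steps to the hub with probability 1 - p and to b with probability p, and
  from b it steps to a or c with probability 1/2 each.  The first passage time to the hub is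
  then odd from a and c, with P(T = 2k + 1) = (1 - p) p^k, and from b it is one step longer; so
  the hitting times are (1 + p)/(1 - p) and 2/(1 - p), and averaging over the 3m non-hub
  vertices gives (4 + 2p)/(3(1 - p)).  Writing p = t/(m + t) this is 4/3 + 2t/m.

  For the TURW p = 1/2, i.e. t = m.  A positive eigenvector of the adjacency matrix is symmetric
  in a and c, and its eigenvalue satisfies lambda^2 = 2m + 2; this gives t = 1 for the MERW.
  A non-negative eigenvector v of the non-backtracking matrix with eigenvalue mu propagates
  along a petal as v(h,a), mu v(h,a), mu^2 v(h,a), mu^3 v(h,a), and closing the cycle at the hub
  gives mu^4 = 2m - 1 and equal weights on all edges leaving the hub; this gives
  t = mu^2 = sqrt(2m - 1) for the NBCRW.
*)
theory Submission
  imports Defs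
begin

lemma sum_two_point_support:
  fixes w p g :: "'v \<Rightarrow> real"
  assumes "finite V" and supp: "{k \<in> V. w k \<noteq> 0} = {x, y}" and "x \<noteq> y"
    and zero: "\<And>k. w k = 0 \<Longrightarrow> p k = 0"
  shows "(\<Sum>k\<in>V. p k * g k) = p x * g x + p y * g y"
proof -
  have "(\<Sum>k\<in>V. p k * g k) = (\<Sum>k\<in>{x, y}. p k * g k)"
  proof (rule sum.mono_neutral_right)
    show "\<forall>k\<in>V - {x, y}. p k * g k = 0"
    proof
      fix k assume "k \<in> V - {x, y}"
      with supp have "w k = 0" by auto
      then show "p k * g k = 0" by (simp add: zero)
    qed
  qed (use assms in auto)
  with \<open>x \<noteq> y\<close> show ?thesis by simp
qed

lemma sums_odd_interleave:
  fixes f :: "nat \<Rightarrow> real"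
  assumes "f sums s"
  shows "(\<lambda>n. if odd n then f (n div 2) else 0) sums s"
proof -
  have "(\<lambda>n. if odd n then f (n div 2) else 0) = (\<lambda>n. if even n then 0 else f ((n - 1) div 2))"
    by (rule ext) (auto elim!: oddE)
  with sums_if[OF assms sums_zero] show ?thesis by simp
qed

lemma first_hit_self: "first_hit V P j j n = (if n = 0 then 1 else 0)"
  by (cases n) simp_all

lemma hitting_time_self: "hitting_time V P j j = 0"
proof -
  have "(\<lambda>n. real n * first_hit V P j j n) = (\<lambda>n. 0)"
    by (simp add: first_hit_self fun_eq_iff)
  then show ?thesis by (simp add: hitting_time_def)
qed

lemma finite_dir_edges: "finite V \<Longrightarrow> finite (dir_edges V a)"
  by (rule finite_subset[of _ "V \<times> V"]) (auto simp: dir_edges_def)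

lemma nb_matrix_row_sum:
  fixes a :: "'v \<Rightarrow> 'v \<Rightarrow> real" and v :: "'v \<times> 'v \<Rightarrow> real"
  assumes "finite V" and sym: "\<And>i j. a i j = a j i" and e: "(i, j) \<in> dir_edges V a"
  shows "(\<Sum>f\<in>dir_edges V a. nb_matrix (i, j) f * v f) = nbc_x V a v j - v (j, i)"
proof -
  let ?N = "{l \<in> V. a j l \<noteq> 0}"
  have "(\<Sum>f\<in>dir_edges V a. nb_matrix (i, j) f * v f) = (\<Sum>f\<in>Pair j ` (?N - {i}). v f)"
  proof (rule sum.mono_neutral_cong_right)
    show "finite (dir_edges V a)"
      using \<open>finite V\<close> by (rule finite_dir_edges)
    show "Pair j ` (?N - {i}) \<subseteq> dir_edges V a"
      using e by (auto simp: dir_edges_def)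
    show "\<forall>f\<in>dir_edges V a - Pair j ` (?N - {i}). nb_matrix (i, j) f * v f = 0"
      by (auto simp: nb_matrix_def dir_edges_def)
  qed (auto simp: nb_matrix_def)
  also have "\<dots> = (\<Sum>l\<in>?N - {i}. v (j, l))"
    by (simp add: sum.reindex inj_on_def)
  also have "\<dots> = nbc_x V a v j - v (j, i)"
    using e sym \<open>finite V\<close> by (simp add: nbc_x_def sum_diff1 dir_edges_def)
  finally show ?thesis .
qed

section \<open>The rose graph\<close>

lemma finite_rose_nodes [simp]: "finite (rose_nodes m)"
  by (simp add: rose_nodes_def)

lemma card_rose_nodes: "card (rose_nodes m) = 3 * m + 1"
  by (simp add: rose_nodes_def)

lemma sum_rose_nodes:
  "(\<Sum>i\<in>rose_nodes m. f i) = f 0 + (\<Sum>q<m. f (3*q+1) + f (3*q+2) + f (3*q+3))"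
proof (induction m)
  case 0
  show ?case by (simp add: rose_nodes_def)
next
  case (Suc m)
  have "rose_nodes (Suc m) = insert (3*m+3) (insert (3*m+2) (insert (3*m+1) (rose_nodes m)))"
    by (auto simp: rose_nodes_def)
  with Suc.IH show ?case
    by (simp add: rose_nodes_def algebra_simps)
qed

lemma rose_edge_sym: "rose_edge m i j \<longleftrightarrow> rose_edge m j i"
  unfolding rose_edge_def by (simp add: insert_commute)

lemma rose_adj_sym: "rose_adj m i j = rose_adj m j i"
  by (simp add: rose_adj_def rose_edge_sym)

lemma rose_edge_cases:
  assumes "rose_edge m i j"
  obtains q where "q < m" "(i, j) \<in> {(0, 3*q+1), (3*q+1, 0), (3*q+1, 3*q+2), (3*q+2, 3*q+1),
      (3*q+2, 3*q+3), (3*q+3, 3*q+2), (3*q+3, 0), (0, 3*q+3)}"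
  using assms unfolding rose_edge_def doubleton_eq_iff by blast

lemma rose_edge_petal:
  assumes "q < m"
  shows "rose_edge m (3*q+1) k \<longleftrightarrow> k = 0 \<or> k = 3*q+2"
    and "rose_edge m (3*q+2) k \<longleftrightarrow> k = 3*q+1 \<or> k = 3*q+3"
    and "rose_edge m (3*q+3) k \<longleftrightarrow> k = 0 \<or> k = 3*q+2"
  using assms by (auto simp: rose_edge_def doubleton_eq_iff) presburger+

lemma rose_adj_petal:
  assumes "q < m"
  shows "rose_adj m (3*q+1) 0 = 1" "rose_adj m (3*q+1) (3*q+2) = 1"
    "rose_adj m (3*q+2) (3*q+1) = 1" "rose_adj m (3*q+2) (3*q+3) = 1"
    "rose_adj m (3*q+3) 0 = 1" "rose_adj m (3*q+3) (3*q+2) = 1"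
  using rose_edge_petal[OF assms] by (simp_all add: rose_adj_def)

lemma rose_adj_hub:
  assumes "q < m"
  shows "rose_adj m 0 (3*q+1) = 1" "rose_adj m 0 (3*q+2) = 0" "rose_adj m 0 (3*q+3) = 1"
  using rose_edge_petal[OF assms] by (simp_all add: rose_adj_def rose_edge_sym[of m 0])

lemma rose_adj_hub_hub: "rose_adj m 0 0 = 0"
  by (simp add: rose_adj_def rose_edge_def doubleton_eq_iff)

lemma rose_neighbours:
  assumes "q < m"
  shows "{k \<in> rose_nodes m. rose_adj m (3*q+1) k \<noteq> 0} = {0, 3*q+2}"
    and "{k \<in> rose_nodes m. rose_adj m (3*q+2) k \<noteq> 0} = {3*q+1, 3*q+3}"
    and "{k \<in> rose_nodes m. rose_adj m (3*q+3) k \<noteq> 0} = {0, 3*q+2}"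
  using assms rose_edge_petal[OF assms] by (auto simp: rose_nodes_def rose_adj_def)

lemma rose_dir_edges_iff:
  "(i, j) \<in> dir_edges (rose_nodes m) (rose_adj m) \<longleftrightarrow> rose_edge m i j"
proof
  assume "rose_edge m i j"
  then obtain q where "q < m" "(i, j) \<in> {(0, 3*q+1), (3*q+1, 0), (3*q+1, 3*q+2), (3*q+2, 3*q+1),
      (3*q+2, 3*q+3), (3*q+3, 3*q+2), (3*q+3, 0), (0, 3*q+3)}"
    by (rule rose_edge_cases)
  then have "i \<in> rose_nodes m" "j \<in> rose_nodes m"
    by (auto simp: rose_nodes_def)
  with \<open>rose_edge m i j\<close> show "(i, j) \<in> dir_edges (rose_nodes m) (rose_adj m)"
    by (simp add: dir_edges_def rose_adj_def)
qed (simp add: dir_edges_def rose_adj_def split: if_splits)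

lemma rose_row_sum:
  fixes P :: "nat \<Rightarrow> nat \<Rightarrow> real"
  assumes q: "q < m" and support: "\<forall>i k. rose_adj m i k = 0 \<longrightarrow> P i k = 0"
  shows "(\<Sum>k\<in>rose_nodes m. P (3*q+1) k * g k)
      = P (3*q+1) 0 * g 0 + P (3*q+1) (3*q+2) * g (3*q+2)"
    and "(\<Sum>k\<in>rose_nodes m. P (3*q+2) k * g k)
      = P (3*q+2) (3*q+1) * g (3*q+1) + P (3*q+2) (3*q+3) * g (3*q+3)"
    and "(\<Sum>k\<in>rose_nodes m. P (3*q+3) k * g k)
      = P (3*q+3) 0 * g 0 + P (3*q+3) (3*q+2) * g (3*q+2)"
  using sum_two_point_support[OF _ rose_neighbours(1)[OF q] _ support[rule_format, of "3*q+1"]]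
    sum_two_point_support[OF _ rose_neighbours(2)[OF q] _ support[rule_format, of "3*q+2"]]
    sum_two_point_support[OF _ rose_neighbours(3)[OF q] _ support[rule_format, of "3*q+3"]]
  by simp_all

lemma rose_adj_row_sum:
  assumes "q < m"
  shows "(\<Sum>k\<in>rose_nodes m. rose_adj m (3*q+1) k * g k) = g 0 + g (3*q+2)"
    and "(\<Sum>k\<in>rose_nodes m. rose_adj m (3*q+2) k * g k) = g (3*q+1) + g (3*q+3)"
    and "(\<Sum>k\<in>rose_nodes m. rose_adj m (3*q+3) k * g k) = g 0 + g (3*q+2)"
  using rose_row_sum[OF assms, of "rose_adj m" g] unfolding rose_adj_petal[OF assms] by simp_all

lemma rose_adj_hub_row_sum:
  "(\<Sum>k\<in>rose_nodes m. rose_adj m 0 k * g k) = (\<Sum>q<m. g (3*q+1) + g (3*q+3))"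
proof -
  have "rose_adj m 0 (3*q+1) * g (3*q+1) + rose_adj m 0 (3*q+2) * g (3*q+2)
      + rose_adj m 0 (3*q+3) * g (3*q+3) = g (3*q+1) + g (3*q+3)" if "q < m" for q
    using rose_adj_hub[OF that] by simp
  then show ?thesis
    by (simp add: sum_rose_nodes rose_adj_hub_hub)
qed

section \<open>Walks that are symmetric within each petal\<close>

text \<open>First passage distributions to the hub, from an outer node of a petal (one adjacent to
  the hub) and from its middle node.\<close>

definition outer_first_hit :: "real \<Rightarrow> nat \<Rightarrow> real" where
  "outer_first_hit p n = (if odd n then (1 - p) * p ^ (n div 2) else 0)"

definition middle_first_hit :: "real \<Rightarrow> nat \<Rightarrow> real" where
  "middle_first_hit p n = (case n of 0 \<Rightarrow> 0 | Suc k \<Rightarrow> outer_first_hit p k)"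

lemma outer_first_hit_Suc:
  "outer_first_hit p (Suc n) = (if n = 0 then 1 - p else 0) + p * middle_first_hit p n"
  by (cases n) (auto simp: outer_first_hit_def middle_first_hit_def)

lemma outer_first_hit_mean:
  assumes "0 \<le> p" "p < 1"
  shows "(\<lambda>n. real n * outer_first_hit p n) sums ((1 + p) / (1 - p))"
proof -
  have "(\<lambda>k. (1 - p) * (2 * (real (Suc k) * p ^ k) - p ^ k))
      sums ((1 - p) * (2 * (1 / (1 - p)^2) - 1 / (1 - p)))"
    using geometric_deriv_sums[of p] geometric_sums[of p] assms
    by (intro sums_mult sums_diff) auto
  also have "(1 - p) * (2 * (1 / (1 - p)^2) - 1 / (1 - p)) = (1 + p) / (1 - p)"
    using assms by (simp add: power2_eq_square divide_simps) (simp add: algebra_simps)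
  finally have "(\<lambda>k. real (2 * k + 1) * ((1 - p) * p ^ k)) sums ((1 + p) / (1 - p))"
    by (simp add: algebra_simps)
  from sums_odd_interleave[OF this] show ?thesis
    by (rule sums_cong[THEN iffD1, rotated]) (auto simp: outer_first_hit_def elim: oddE)
qed

lemma middle_first_hit_mean:
  assumes "0 \<le> p" "p < 1"
  shows "(\<lambda>n. real n * middle_first_hit p n) sums (2 / (1 - p))"
proof -
  have "(\<lambda>k. 2 * (1 - p) * (real (Suc k) * p ^ k)) sums (2 * (1 - p) * (1 / (1 - p)^2))"
    using geometric_deriv_sums[of p] assms by (intro sums_mult) auto
  also have "2 * (1 - p) * (1 / (1 - p)^2) = 2 / (1 - p)"
    using assms by (simp add: power2_eq_square divide_simps)
  finally have "(\<lambda>k. real (2 * k + 2) * ((1 - p) * p ^ k)) sums (2 / (1 - p))"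
    by (simp add: algebra_simps)
  from sums_odd_interleave[OF this]
  have "(\<lambda>n. real (Suc n) * middle_first_hit p (Suc n)) sums (2 / (1 - p))"
    by (rule sums_cong[THEN iffD1, rotated])
      (auto simp: middle_first_hit_def outer_first_hit_def elim: oddE)
  from sums_Suc_iff[where f = "\<lambda>n. real n * middle_first_hit p n", THEN iffD1, OF this]
  show ?thesis by simp
qed

definition petal_walk :: "nat \<Rightarrow> real \<Rightarrow> (nat \<Rightarrow> nat \<Rightarrow> real) \<Rightarrow> bool" where
  "petal_walk m p P \<longleftrightarrow> (\<forall>i k. rose_adj m i k = 0 \<longrightarrow> P i k = 0) \<and>
     (\<forall>q<m. P (3*q+1) 0 = 1 - p \<and> P (3*q+1) (3*q+2) = p \<and>
            P (3*q+2) (3*q+1) = 1/2 \<and> P (3*q+2) (3*q+3) = 1/2 \<and>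
            P (3*q+3) 0 = 1 - p \<and> P (3*q+3) (3*q+2) = p)"

lemma petal_walk_step:
  assumes "petal_walk m p P" "q < m"
  shows "(\<Sum>k\<in>rose_nodes m. P (3*q+1) k * g k) = (1 - p) * g 0 + p * g (3*q+2)"
    and "(\<Sum>k\<in>rose_nodes m. P (3*q+2) k * g k) = (g (3*q+1) + g (3*q+3)) / 2"
    and "(\<Sum>k\<in>rose_nodes m. P (3*q+3) k * g k) = (1 - p) * g 0 + p * g (3*q+2)"
proof -
  have supp: "\<forall>i k. rose_adj m i k = 0 \<longrightarrow> P i k = 0"
    and probs: "P (3*q+1) 0 = 1 - p" "P (3*q+1) (3*q+2) = p"
      "P (3*q+2) (3*q+1) = 1/2" "P (3*q+2) (3*q+3) = 1/2"
      "P (3*q+3) 0 = 1 - p" "P (3*q+3) (3*q+2) = p"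
    using assms unfolding petal_walk_def by blast+
  show "(\<Sum>k\<in>rose_nodes m. P (3*q+1) k * g k) = (1 - p) * g 0 + p * g (3*q+2)"
    "(\<Sum>k\<in>rose_nodes m. P (3*q+2) k * g k) = (g (3*q+1) + g (3*q+3)) / 2"
    "(\<Sum>k\<in>rose_nodes m. P (3*q+3) k * g k) = (1 - p) * g 0 + p * g (3*q+2)"
    using rose_row_sum[OF \<open>q < m\<close> supp, of g] unfolding probs by simp_all
qed

lemma first_hit_petal_walk:
  assumes "petal_walk m p P" "q < m"
  shows "first_hit (rose_nodes m) P 0 (3*q+1) n = outer_first_hit p n
    \<and> first_hit (rose_nodes m) P 0 (3*q+2) n = middle_first_hit p n
    \<and> first_hit (rose_nodes m) P 0 (3*q+3) n = outer_first_hit p n"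
proof (induction n)
  case 0
  show ?case by (simp add: outer_first_hit_def middle_first_hit_def)
next
  case (Suc n)
  then show ?case
    using petal_walk_step[OF assms, of "\<lambda>k. first_hit (rose_nodes m) P 0 k n"]
    by (simp add: first_hit_self outer_first_hit_Suc middle_first_hit_def)
qed

lemma hitting_time_petal_walk:
  assumes "petal_walk m p P" "q < m" "0 \<le> p" "p < 1"
  shows "hitting_time (rose_nodes m) P (3*q+1) 0 = (1 + p) / (1 - p)"
    and "hitting_time (rose_nodes m) P (3*q+2) 0 = 2 / (1 - p)"
    and "hitting_time (rose_nodes m) P (3*q+3) 0 = (1 + p) / (1 - p)"
  using first_hit_petal_walk[OF assms(1,2)] outer_first_hit_mean[OF assms(3,4)]
    middle_first_hit_mean[OF assms(3,4)]
  by (simp_all add: hitting_time_def sums_iff)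

lemma petal_walk_partial_mean_hitting_time:
  assumes "petal_walk m p P" "0 \<le> p" "p < 1" "m \<ge> 1"
  shows "partial_mean_hitting_time (rose_nodes m) P 0 = (4 + 2 * p) / (3 * (1 - p))"
proof -
  have "(\<Sum>i\<in>rose_nodes m. hitting_time (rose_nodes m) P i 0) = real m * ((4 + 2 * p) / (1 - p))"
    using hitting_time_petal_walk[OF assms(1) _ assms(2,3)]
    by (simp add: sum_rose_nodes hitting_time_self add_divide_distrib[symmetric])
  with assms show ?thesis
    by (simp add: partial_mean_hitting_time_def card_rose_nodes)
qed

lemma petal_walk_partial_mean_hitting_time_odds:
  assumes "petal_walk m (t / (real m + t)) P" "0 \<le> t" "m \<ge> 1"
  shows "partial_mean_hitting_time (rose_nodes m) P 0 = 4/3 + 2 * t / real m"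
proof -
  have "real m > 0" "real m + t > 0"
    using assms by auto
  then have "0 \<le> t / (real m + t)" "t / (real m + t) < 1"
    using \<open>0 \<le> t\<close> by (simp_all add: field_simps)
  with assms have "partial_mean_hitting_time (rose_nodes m) P 0
      = (4 + 2 * (t / (real m + t))) / (3 * (1 - t / (real m + t)))"
    by (intro petal_walk_partial_mean_hitting_time) auto
  also have "\<dots> = (4 * real m + 6 * t) / (real m + t) / (3 * (real m / (real m + t)))"
    using \<open>real m + t > 0\<close> by (simp add: field_simps)
  also have "\<dots> = (4 * real m + 6 * t) / (3 * real m)"
    using \<open>real m + t > 0\<close> by simp
  also have "\<dots> = 4/3 + 2 * t / real m"
    using \<open>real m > 0\<close> \<open>real m + t > 0\<close> by (simp add: field_simps)
  finally show ?thesis .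
qed

section \<open>The three random walks\<close>

lemma turw_petal_walk: "petal_walk m (1/2) (turw (rose_nodes m) (rose_adj m))"
proof -
  have "degree (rose_nodes m) (rose_adj m) (3*q+1) = 2"
    and "degree (rose_nodes m) (rose_adj m) (3*q+2) = 2"
    and "degree (rose_nodes m) (rose_adj m) (3*q+3) = 2" if "q < m" for q
    using rose_adj_row_sum[OF that, of "\<lambda>_. 1"] by (simp_all add: degree_def)
  then show ?thesis
    using rose_adj_petal by (simp add: petal_walk_def turw_def)
qed

lemma turw_partial_mean_hitting_time:
  assumes "m \<ge> 1"
  shows "partial_mean_hitting_time (rose_nodes m) (turw (rose_nodes m) (rose_adj m)) hub = 10/3"
  using petal_walk_partial_mean_hitting_time[OF turw_petal_walk] assms by (simp add: hub_def)

lemma rose_positive_eigenvector_petal: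
  assumes "m \<ge> 1" and pos: "\<forall>i\<in>rose_nodes m. \<psi> i > 0"
    and eig: "\<forall>i\<in>rose_nodes m. (\<Sum>j\<in>rose_nodes m. rose_adj m i j * \<psi> j) = L * \<psi> i"
    and q: "q < m"
  shows "L > 0"
    and "\<psi> (3*q+3) = \<psi> (3*q+1)"
    and "L * \<psi> (3*q+2) = 2 * \<psi> (3*q+1)"
    and "(L\<^sup>2 - 2) * \<psi> (3*q+1) = L * \<psi> 0"
proof -
  have petal: "\<psi> 0 + \<psi> (3*q+2) = L * \<psi> (3*q+1)" "\<psi> (3*q+1) + \<psi> (3*q+3) = L * \<psi> (3*q+2)"
      "\<psi> 0 + \<psi> (3*q+2) = L * \<psi> (3*q+3)" if "q < m" for q
    using eig rose_adj_row_sum[OF that, of \<psi>] that by (auto simp: rose_nodes_def)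
  have pos': "\<psi> i > 0" if "i \<le> 3 * m" for i
    using pos that by (simp add: rose_nodes_def)
  have "L * \<psi> 1 > 0"
    using petal(1)[of 0] pos'[of 0] pos'[of "3*0+2"] \<open>m \<ge> 1\<close> by simp
  then show "L > 0"
    using pos'[of 1] \<open>m \<ge> 1\<close> by (simp add: zero_less_mult_iff)
  then show outer: "\<psi> (3*q+3) = \<psi> (3*q+1)"
    using petal(1,3)[OF q] by simp
  then show middle: "L * \<psi> (3*q+2) = 2 * \<psi> (3*q+1)"
    using petal(2)[OF q] by simp
  have "(L\<^sup>2 - 2) * \<psi> (3*q+1) = L * (L * \<psi> (3*q+1)) - 2 * \<psi> (3*q+1)"
    by (simp add: power2_eq_square algebra_simps)
  also have "\<dots> = L * \<psi> 0"
    unfolding petal(1)[OF q, symmetric] distrib_left middle by simp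
  finally show "(L\<^sup>2 - 2) * \<psi> (3*q+1) = L * \<psi> 0" .
qed

lemma rose_positive_eigenvalue:
  assumes "m \<ge> 1" and pos: "\<forall>i\<in>rose_nodes m. \<psi> i > 0"
    and eig: "\<forall>i\<in>rose_nodes m. (\<Sum>j\<in>rose_nodes m. rose_adj m i j * \<psi> j) = L * \<psi> i"
  shows "L\<^sup>2 = 2 * real m + 2"
proof -
  note petal = rose_positive_eigenvector_petal[OF assms]
  have "(\<Sum>q<m. \<psi> (3*q+1) + \<psi> (3*q+3)) = L * \<psi> 0"
    using eig rose_adj_hub_row_sum[of m \<psi>] by (simp add: rose_nodes_def)
  also have "(\<Sum>q<m. \<psi> (3*q+1) + \<psi> (3*q+3)) = (\<Sum>q<m. 2 * \<psi> (3*q+1))"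
    by (rule sum.cong) (use petal(2) in auto)
  finally have hub: "(\<Sum>q<m. 2 * \<psi> (3*q+1)) = L * \<psi> 0" .
  have "(L\<^sup>2 - 2) * (L * \<psi> 0) = (\<Sum>q<m. 2 * ((L\<^sup>2 - 2) * \<psi> (3*q+1)))"
    unfolding hub[symmetric] by (simp add: sum_distrib_left mult.left_commute)
  also have "\<dots> = (\<Sum>q<m. 2 * (L * \<psi> 0))"
    by (rule sum.cong) (use petal(4) in auto)
  also have "\<dots> = 2 * real m * (L * \<psi> 0)"
    by simp
  finally have "(L\<^sup>2 - 2) * (L * \<psi> 0) = 2 * real m * (L * \<psi> 0)" .
  moreover have "\<psi> 0 > 0"
    using pos by (simp add: rose_nodes_def)
  then have "L * \<psi> 0 \<noteq> 0"
    using petal(1)[of 0] \<open>m \<ge> 1\<close> by simp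
  ultimately show ?thesis
    by simp
qed

lemma rose_positive_eigenvector_ratios:
  assumes "m \<ge> 1" and pos: "\<forall>i\<in>rose_nodes m. \<psi> i > 0"
    and eig: "\<forall>i\<in>rose_nodes m. (\<Sum>j\<in>rose_nodes m. rose_adj m i j * \<psi> j) = L * \<psi> i"
    and q: "q < m"
  shows "1 / L * (\<psi> 0 / \<psi> (3*q+1)) = 1 - 1 / (real m + 1)"
    and "1 / L * (\<psi> (3*q+2) / \<psi> (3*q+1)) = 1 / (real m + 1)"
    and "1 / L * (\<psi> (3*q+1) / \<psi> (3*q+2)) = 1/2"
proof -
  note L2 = rose_positive_eigenvalue[OF assms(1-3)]
  note petal = rose_positive_eigenvector_petal[OF assms]
  have pos_a: "\<psi> (3*q+1) > 0"
    using pos q by (simp add: rose_nodes_def)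
  have hub: "L * \<psi> 0 = 2 * real m * \<psi> (3*q+1)"
    using petal(4) L2 by simp
  have "1 / L * (\<psi> 0 / \<psi> (3*q+1)) = (L * \<psi> 0) / (L\<^sup>2 * \<psi> (3*q+1))"
    using petal(1) by (simp add: power2_eq_square)
  also have "\<dots> = 2 * real m / (2 * real m + 2)"
    unfolding hub L2 using pos_a by (simp add: mult.assoc)
  also have "\<dots> = 1 - 1 / (real m + 1)"
    by (simp add: field_simps)
  finally show "1 / L * (\<psi> 0 / \<psi> (3*q+1)) = 1 - 1 / (real m + 1)" .
  have "1 / L * (\<psi> (3*q+2) / \<psi> (3*q+1)) = (L * \<psi> (3*q+2)) / (L\<^sup>2 * \<psi> (3*q+1))"
    using petal(1) by (simp add: power2_eq_square)
  also have "\<dots> = 2 / (2 * real m + 2)"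
    unfolding petal(3) L2 using pos_a by simp
  also have "\<dots> = 1 / (real m + 1)"
    by (simp add: field_simps)
  finally show "1 / L * (\<psi> (3*q+2) / \<psi> (3*q+1)) = 1 / (real m + 1)" .
  show "1 / L * (\<psi> (3*q+1) / \<psi> (3*q+2)) = 1/2"
    using petal(3) pos_a by (simp add: field_simps)
qed

lemma merw_petal_walk:
  assumes "m \<ge> 1" and pos: "\<forall>i\<in>rose_nodes m. \<psi> i > 0"
    and eig: "\<forall>i\<in>rose_nodes m. (\<Sum>j\<in>rose_nodes m. rose_adj m i j * \<psi> j)
                = largest_eigenvalue (rose_nodes m) (rose_adj m) * \<psi> i"
  shows "petal_walk m (1 / (real m + 1)) (merw (rose_nodes m) (rose_adj m) \<psi>)"
proof -
  let ?P = "merw (rose_nodes m) (rose_adj m) \<psi>"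
  define L where "L = largest_eigenvalue (rose_nodes m) (rose_adj m)"
  note ratios = rose_positive_eigenvector_ratios[OF assms[folded L_def]]
  note outer = rose_positive_eigenvector_petal(2)[OF assms[folded L_def]]
  have "?P (3*q+1) 0 = 1 - 1 / (real m + 1)" "?P (3*q+1) (3*q+2) = 1 / (real m + 1)"
      "?P (3*q+2) (3*q+1) = 1/2" "?P (3*q+2) (3*q+3) = 1/2"
      "?P (3*q+3) 0 = 1 - 1 / (real m + 1)" "?P (3*q+3) (3*q+2) = 1 / (real m + 1)"
    if q: "q < m" for q
  proof -
    have "\<psi> (3*q+1) > 0" "\<psi> (3*q+2) > 0"
      using pos q by (simp_all add: rose_nodes_def)
    with ratios[OF q] show "?P (3*q+1) 0 = 1 - 1 / (real m + 1)"
      "?P (3*q+1) (3*q+2) = 1 / (real m + 1)" "?P (3*q+2) (3*q+1) = 1/2" "?P (3*q+2) (3*q+3) = 1/2"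
      "?P (3*q+3) 0 = 1 - 1 / (real m + 1)" "?P (3*q+3) (3*q+2) = 1 / (real m + 1)"
      unfolding merw_def L_def[symmetric] rose_adj_petal[OF q] outer[OF q] by simp_all
  qed
  moreover have "\<forall>i k. rose_adj m i k = 0 \<longrightarrow> ?P i k = 0"
    by (simp add: merw_def)
  ultimately show ?thesis
    unfolding petal_walk_def by simp
qed

lemma merw_partial_mean_hitting_time:
  assumes "m \<ge> 1" and "\<forall>i\<in>rose_nodes m. \<psi> i > 0"
    and "\<forall>i\<in>rose_nodes m. (\<Sum>j\<in>rose_nodes m. rose_adj m i j * \<psi> j)
           = largest_eigenvalue (rose_nodes m) (rose_adj m) * \<psi> i"
  shows "partial_mean_hitting_time (rose_nodes m) (merw (rose_nodes m) (rose_adj m) \<psi>) hub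
    = 4/3 + 2 / real m"
  using petal_walk_partial_mean_hitting_time_odds[OF merw_petal_walk[OF assms]] assms(1)
  by (simp add: hub_def)

lemma nbc_x_petal:
  assumes "q < m"
  shows "nbc_x (rose_nodes m) (rose_adj m) v (3*q+1) = v (3*q+1, 0) + v (3*q+1, 3*q+2)"
    and "nbc_x (rose_nodes m) (rose_adj m) v (3*q+2) = v (3*q+2, 3*q+1) + v (3*q+2, 3*q+3)"
    and "nbc_x (rose_nodes m) (rose_adj m) v (3*q+3) = v (3*q+3, 0) + v (3*q+3, 3*q+2)"
  unfolding nbc_x_def rose_neighbours[OF assms] by simp_all

lemma nbc_x_hub:
  "nbc_x (rose_nodes m) (rose_adj m) v 0 = (\<Sum>q<m. v (0, 3*q+1) + v (0, 3*q+3))"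
proof -
  have "nbc_x (rose_nodes m) (rose_adj m) v 0
      = (\<Sum>l\<in>rose_nodes m. if rose_adj m 0 l \<noteq> 0 then v (0, l) else 0)"
    unfolding nbc_x_def by (rule sum.inter_filter[OF finite_rose_nodes])
  also have "\<dots> = (\<Sum>l\<in>rose_nodes m. rose_adj m 0 l * v (0, l))"
    by (rule sum.cong) (simp_all add: rose_adj_def)
  finally show ?thesis
    by (simp add: rose_adj_hub_row_sum)
qed

lemma nb_eigenvector_petal_chain:
  fixes v :: "nat \<times> nat \<Rightarrow> real"
  assumes eig: "\<forall>e\<in>dir_edges (rose_nodes m) (rose_adj m).
      (\<Sum>f\<in>dir_edges (rose_nodes m) (rose_adj m). nb_matrix e f * v f) = \<mu> * v e"
    and q: "q < m"
  shows "v (3*q+1, 3*q+2) = \<mu> * v (0, 3*q+1)"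
    and "v (3*q+2, 3*q+3) = \<mu>^2 * v (0, 3*q+1)"
    and "v (3*q+3, 0) = \<mu>^3 * v (0, 3*q+1)"
    and "nbc_x (rose_nodes m) (rose_adj m) v 0 - v (0, 3*q+3) = \<mu>^4 * v (0, 3*q+1)"
    and "v (3*q+3, 3*q+2) = \<mu> * v (0, 3*q+3)"
    and "v (3*q+2, 3*q+1) = \<mu>^2 * v (0, 3*q+3)"
    and "v (3*q+1, 0) = \<mu>^3 * v (0, 3*q+3)"
    and "nbc_x (rose_nodes m) (rose_adj m) v 0 - v (0, 3*q+1) = \<mu>^4 * v (0, 3*q+3)"
proof -
  let ?x = "nbc_x (rose_nodes m) (rose_adj m) v"
  have step: "\<mu> * v (i, j) = ?x j - v (j, i)" if "rose_edge m i j" for i j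
  proof -
    have e: "(i, j) \<in> dir_edges (rose_nodes m) (rose_adj m)"
      using that by (simp add: rose_dir_edges_iff)
    show ?thesis
      using eig[rule_format, OF e] nb_matrix_row_sum[OF finite_rose_nodes rose_adj_sym e] by simp
  qed
  have edges: "rose_edge m 0 (3*q+1)" "rose_edge m (3*q+1) (3*q+2)" "rose_edge m (3*q+2) (3*q+3)"
      "rose_edge m (3*q+3) 0" "rose_edge m 0 (3*q+3)" "rose_edge m (3*q+3) (3*q+2)"
      "rose_edge m (3*q+2) (3*q+1)" "rose_edge m (3*q+1) 0"
    using rose_edge_petal[OF q] rose_edge_sym by blast+
  note x = nbc_x_petal[OF q, of v]
  have "v (3*q+1, 3*q+2) = \<mu> * v (0, 3*q+1)"
      "v (3*q+2, 3*q+3) = \<mu> * v (3*q+1, 3*q+2)"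
      "v (3*q+3, 0) = \<mu> * v (3*q+2, 3*q+3)"
      "?x 0 - v (0, 3*q+3) = \<mu> * v (3*q+3, 0)"
      "v (3*q+3, 3*q+2) = \<mu> * v (0, 3*q+3)"
      "v (3*q+2, 3*q+1) = \<mu> * v (3*q+3, 3*q+2)"
      "v (3*q+1, 0) = \<mu> * v (3*q+2, 3*q+1)"
      "?x 0 - v (0, 3*q+1) = \<mu> * v (3*q+1, 0)"
    using step[OF edges(1)] step[OF edges(2)] step[OF edges(3)] step[OF edges(4)]
      step[OF edges(5)] step[OF edges(6)] step[OF edges(7)] step[OF edges(8)]
    unfolding x by simp_all
  then show "v (3*q+1, 3*q+2) = \<mu> * v (0, 3*q+1)"
    and "v (3*q+2, 3*q+3) = \<mu>^2 * v (0, 3*q+1)"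
    and "v (3*q+3, 0) = \<mu>^3 * v (0, 3*q+1)"
    and "?x 0 - v (0, 3*q+3) = \<mu>^4 * v (0, 3*q+1)"
    and "v (3*q+3, 3*q+2) = \<mu> * v (0, 3*q+3)"
    and "v (3*q+2, 3*q+1) = \<mu>^2 * v (0, 3*q+3)"
    and "v (3*q+1, 0) = \<mu>^3 * v (0, 3*q+3)"
    and "?x 0 - v (0, 3*q+1) = \<mu>^4 * v (0, 3*q+3)"
    by (simp_all add: eval_nat_numeral mult.assoc)
qed

lemma nb_eigenvector_hub_weight_pos:
  fixes m :: nat and v :: "nat \<times> nat \<Rightarrow> real"
  defines "D \<equiv> dir_edges (rose_nodes m) (rose_adj m)"
  assumes nonneg: "\<forall>e\<in>D. v e \<ge> 0" and nonzero: "\<exists>e\<in>D. v e \<noteq> 0"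
    and eig: "\<forall>e\<in>D. (\<Sum>f\<in>D. nb_matrix e f * v f) = \<mu> * v e"
  shows "nbc_x (rose_nodes m) (rose_adj m) v 0 > 0"
proof -
  note chain = nb_eigenvector_petal_chain[OF eig[unfolded D_def]]
  have "(0, 3*q+1) \<in> D" "(0, 3*q+3) \<in> D" if "q < m" for q
    using rose_edge_petal[OF that] unfolding D_def rose_dir_edges_iff
    by (simp_all add: rose_edge_sym[of m 0])
  with nonneg have hub_nonneg: "v (0, 3*q+1) \<ge> 0" "v (0, 3*q+3) \<ge> 0" if "q < m" for q
    using that by auto
  then have "(\<Sum>q<m. v (0, 3*q+1) + v (0, 3*q+3)) \<ge> 0"
    by (intro sum_nonneg add_nonneg_nonneg) auto
  moreover have "(\<Sum>q<m. v (0, 3*q+1) + v (0, 3*q+3)) \<noteq> 0"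
  proof
    assume "(\<Sum>q<m. v (0, 3*q+1) + v (0, 3*q+3)) = 0"
    then have "\<forall>q\<in>{..<m}. v (0, 3*q+1) + v (0, 3*q+3) = 0"
      using hub_nonneg sum_nonneg_eq_0_iff[of "{..<m}" "\<lambda>q. v (0, 3*q+1) + v (0, 3*q+3)"]
      by (simp add: add_nonneg_nonneg)
    then have hub_zero: "v (0, 3*q+1) = 0 \<and> v (0, 3*q+3) = 0" if "q < m" for q
      using hub_nonneg[OF that] that by (meson add_nonneg_eq_0_iff lessThan_iff)
    obtain i j where "(i, j) \<in> D" and "v (i, j) \<noteq> 0"
      using nonzero by auto
    from \<open>(i, j) \<in> D\<close> obtain q where "q < m" and "(i, j) \<in> {(0, 3*q+1), (3*q+1, 0),
        (3*q+1, 3*q+2), (3*q+2, 3*q+1), (3*q+2, 3*q+3), (3*q+3, 3*q+2), (3*q+3, 0), (0, 3*q+3)}"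
      unfolding D_def rose_dir_edges_iff by (rule rose_edge_cases)
    with \<open>v (i, j) \<noteq> 0\<close> show False
      using chain[OF \<open>q < m\<close>] hub_zero[OF \<open>q < m\<close>] by auto
  qed
  ultimately show ?thesis
    by (simp add: nbc_x_hub)
qed

lemma nb_eigenvector_hub_values:
  fixes m :: nat and v :: "nat \<times> nat \<Rightarrow> real"
  defines "D \<equiv> dir_edges (rose_nodes m) (rose_adj m)"
    and "S \<equiv> nbc_x (rose_nodes m) (rose_adj m) v 0"
  assumes "m \<ge> 2"
    and nonneg: "\<forall>e\<in>D. v e \<ge> 0" and nonzero: "\<exists>e\<in>D. v e \<noteq> 0"
    and eig: "\<forall>e\<in>D. (\<Sum>f\<in>D. nb_matrix e f * v f) = \<mu> * v e"
  shows "\<mu>^4 = 2 * real m - 1" and "\<mu> > 0"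
    and "q < m \<Longrightarrow> v (0, 3*q+1) = S / (2 * real m) \<and> v (0, 3*q+3) = S / (2 * real m)"
proof -
  note chain = nb_eigenvector_petal_chain[OF eig[unfolded D_def], folded S_def]
  have "S > 0"
    using nb_eigenvector_hub_weight_pos[OF nonneg[unfolded D_def] nonzero[unfolded D_def]
        eig[unfolded D_def]]
    by (simp add: S_def)
  have S_sum: "S = (\<Sum>q<m. v (0, 3*q+1) + v (0, 3*q+3))"
    unfolding S_def by (rule nbc_x_hub)
  have "(2 * real m - 1) * S = (\<Sum>q<m. (S - v (0, 3*q+3)) + (S - v (0, 3*q+1)))"
    by (simp add: sum.distrib sum_subtractf S_sum algebra_simps)
  also have "\<dots> = (\<Sum>q<m. \<mu>^4 * (v (0, 3*q+1) + v (0, 3*q+3)))"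
  proof (rule sum.cong)
    fix q assume "q \<in> {..<m}"
    with chain(4,8) show "(S - v (0, 3*q+3)) + (S - v (0, 3*q+1))
        = \<mu>^4 * (v (0, 3*q+1) + v (0, 3*q+3))"
      by (simp add: distrib_left)
  qed simp
  also have "\<dots> = \<mu>^4 * S"
    by (simp add: S_sum sum_distrib_left)
  finally show mu4: "\<mu>^4 = 2 * real m - 1"
    using \<open>S > 0\<close> by simp
  have hub_values: "v (0, 3*q+1) = S / (2 * real m) \<and> v (0, 3*q+3) = S / (2 * real m)"
    if "q < m" for q
  proof -
    \<comment> \<open>Here \<open>m \<ge> 2\<close> is essential: it makes \<open>\<mu>^4 \<noteq> 1\<close>.\<close>
    have "(\<mu>^4 - 1) * (v (0, 3*q+1) - v (0, 3*q+3)) = 0"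
      using chain(4,8)[OF that] by (simp add: algebra_simps)
    moreover have "\<mu>^4 - 1 \<noteq> 0"
      using mu4 \<open>m \<ge> 2\<close> by simp
    ultimately have "v (0, 3*q+3) = v (0, 3*q+1)" by simp
    moreover have "S = 2 * real m * v (0, 3*q+1)"
      using chain(4)[OF that] mu4 calculation by (simp add: algebra_simps)
    ultimately show ?thesis
      using \<open>m \<ge> 2\<close> by simp
  qed
  then show "q < m \<Longrightarrow> v (0, 3*q+1) = S / (2 * real m) \<and> v (0, 3*q+3) = S / (2 * real m)" .
  have "0 < m" using \<open>m \<ge> 2\<close> by simp
  have "(3*0+1, 3*0+2) \<in> D"
    using rose_edge_petal(1)[OF \<open>0 < m\<close>] unfolding D_def rose_dir_edges_iff by blast
  then have "\<mu> * v (0, 3*0+1) \<ge> 0" "v (0, 3*0+1) > 0"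
    using chain(1)[OF \<open>0 < m\<close>] nonneg hub_values[OF \<open>0 < m\<close>] \<open>S > 0\<close> \<open>0 < m\<close> by auto
  then have "\<mu> \<ge> 0" by (simp add: zero_le_mult_iff)
  moreover have "\<mu> \<noteq> 0"
    using mu4 \<open>m \<ge> 2\<close> by auto
  ultimately show "\<mu> > 0" by simp
qed

lemma nbc_x_petal_values:
  fixes m :: nat and v :: "nat \<times> nat \<Rightarrow> real"
  defines "D \<equiv> dir_edges (rose_nodes m) (rose_adj m)"
    and "x \<equiv> nbc_x (rose_nodes m) (rose_adj m) v"
  assumes "m \<ge> 2"
    and nonneg: "\<forall>e\<in>D. v e \<ge> 0" and nonzero: "\<exists>e\<in>D. v e \<noteq> 0"
    and eig: "\<forall>e\<in>D. (\<Sum>f\<in>D. nb_matrix e f * v f) = \<mu> * v e"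
    and q: "q < m"
  shows "x (3*q+1) = (\<mu>^3 + \<mu>) * (x 0 / (2 * real m))"
    and "x (3*q+2) = 2 * sqrt (2 * real m - 1) * (x 0 / (2 * real m))"
    and "x (3*q+3) = (\<mu>^3 + \<mu>) * (x 0 / (2 * real m))"
proof -
  note hub = nb_eigenvector_hub_values[OF \<open>m \<ge> 2\<close> nonneg[unfolded D_def] nonzero[unfolded D_def]
      eig[unfolded D_def], folded x_def]
  note chain = nb_eigenvector_petal_chain[OF eig[unfolded D_def] q]
  have "\<mu>\<^sup>2 = sqrt (2 * real m - 1)"
    using real_sqrt_unique[of "\<mu>\<^sup>2" "2 * real m - 1"] hub(1) by (simp flip: power_mult)
  with hub(3)[OF q] show "x (3*q+1) = (\<mu>^3 + \<mu>) * (x 0 / (2 * real m))"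
    and "x (3*q+2) = 2 * sqrt (2 * real m - 1) * (x 0 / (2 * real m))"
    and "x (3*q+3) = (\<mu>^3 + \<mu>) * (x 0 / (2 * real m))"
    unfolding x_def nbc_x_petal[OF q] chain by (simp_all add: algebra_simps add_divide_distrib)
qed

lemma nbcrw_petal_walk:
  fixes m :: nat and v :: "nat \<times> nat \<Rightarrow> real"
  defines "D \<equiv> dir_edges (rose_nodes m) (rose_adj m)"
  assumes "m \<ge> 2"
    and nonneg: "\<forall>e\<in>D. v e \<ge> 0" and nonzero: "\<exists>e\<in>D. v e \<noteq> 0"
    and eig: "\<forall>e\<in>D. (\<Sum>f\<in>D. nb_matrix e f * v f) = \<mu> * v e"
  shows "petal_walk m (sqrt (2 * real m - 1) / (real m + sqrt (2 * real m - 1)))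
    (nbcrw (rose_nodes m) (rose_adj m) v)"
proof -
  let ?x = "nbc_x (rose_nodes m) (rose_adj m) v"
  let ?P = "nbcrw (rose_nodes m) (rose_adj m) v"
  define s where "s = sqrt (2 * real m - 1)"
  define U where "U = ?x 0 / (2 * real m)"
  note assms' = \<open>m \<ge> 2\<close> nonneg[unfolded D_def] nonzero[unfolded D_def] eig[unfolded D_def]
  have "real m > 0" "s > 0"
    using \<open>m \<ge> 2\<close> by (simp_all add: s_def)
  then have "U > 0" "real m + s > 0"
    using nb_eigenvector_hub_weight_pos[OF assms'(2-4)] by (simp_all add: U_def)
  have "\<mu>^3 + \<mu> > 0"
    using nb_eigenvector_hub_values(2)[OF assms'] by (simp add: add_pos_pos)
  have x0: "?x 0 = (2 * U) * real m"
    using \<open>real m > 0\<close> by (simp add: U_def)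
  have swap: "2 * s * U = (2 * U) * s"
    by simp
  have "(2 * U) * real m / ((2 * U) * real m + 2 * s * U) = 1 - s / (real m + s)"
    unfolding swap using \<open>U > 0\<close> \<open>real m + s > 0\<close>
    by (simp flip: distrib_left) (simp add: field_simps)
  moreover have "2 * s * U / ((2 * U) * real m + 2 * s * U) = s / (real m + s)"
    unfolding swap using \<open>U > 0\<close> by (simp flip: distrib_left)
  moreover have "(\<mu>^3 + \<mu>) * U / ((\<mu>^3 + \<mu>) * U + (\<mu>^3 + \<mu>) * U) = 1/2"
    using \<open>U > 0\<close> \<open>\<mu>^3 + \<mu> > 0\<close> by simp
  ultimately have "?P (3*q+1) 0 = 1 - s / (real m + s)" "?P (3*q+1) (3*q+2) = s / (real m + s)"
      "?P (3*q+2) (3*q+1) = 1/2" "?P (3*q+2) (3*q+3) = 1/2"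
      "?P (3*q+3) 0 = 1 - s / (real m + s)" "?P (3*q+3) (3*q+2) = s / (real m + s)"
    if q: "q < m" for q
    unfolding nbcrw_def rose_adj_row_sum[OF q] rose_adj_petal[OF q] x0
      nbc_x_petal_values[OF assms' q, folded U_def s_def]
    by simp_all
  moreover have "\<forall>i k. rose_adj m i k = 0 \<longrightarrow> ?P i k = 0"
    by (simp add: nbcrw_def)
  ultimately show ?thesis
    unfolding petal_walk_def s_def by simp
qed

lemma nbcrw_partial_mean_hitting_time:
  fixes m :: nat and v :: "nat \<times> nat \<Rightarrow> real"
  defines "D \<equiv> dir_edges (rose_nodes m) (rose_adj m)"
  assumes "m \<ge> 2"
    and "\<forall>e\<in>D. v e \<ge> 0" and "\<exists>e\<in>D. v e \<noteq> 0"
    and "\<forall>e\<in>D. (\<Sum>f\<in>D. nb_matrix e f * v f) = \<mu> * v e"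
  shows "partial_mean_hitting_time (rose_nodes m) (nbcrw (rose_nodes m) (rose_adj m) v) hub
    = 4/3 + 2 * sqrt (2 * real m - 1) / real m"
  using petal_walk_partial_mean_hitting_time_odds[OF nbcrw_petal_walk[OF assms(2-5)[unfolded D_def]]]
    \<open>m \<ge> 2\<close> by (simp add: hub_def)

theorem theorem6:
  fixes m :: nat and \<psi> :: "nat \<Rightarrow> real" and v :: "nat \<times> nat \<Rightarrow> real"
  assumes m2: "m \<ge> 2"
    and psi_pos: "\<forall>i\<in>rose_nodes m. \<psi> i > 0"
    and psi_eig: "\<forall>i\<in>rose_nodes m. (\<Sum>j\<in>rose_nodes m. rose_adj m i j * \<psi> j)
                    = largest_eigenvalue (rose_nodes m) (rose_adj m) * \<psi> i"
    and psi_unit: "(\<Sum>i\<in>rose_nodes m. (\<psi> i)\<^sup>2) = 1"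
    and v_nonneg: "\<forall>e\<in>dir_edges (rose_nodes m) (rose_adj m). v e \<ge> 0"
    and v_nonzero: "\<exists>e\<in>dir_edges (rose_nodes m) (rose_adj m). v e \<noteq> 0"
    and v_eig: "\<forall>e\<in>dir_edges (rose_nodes m) (rose_adj m).
                 (\<Sum>f\<in>dir_edges (rose_nodes m) (rose_adj m). nb_matrix e f * v f)
                 = pf_eigenvalue (dir_edges (rose_nodes m) (rose_adj m)) nb_matrix * v e"
  shows "partial_mean_hitting_time (rose_nodes m) (turw (rose_nodes m) (rose_adj m)) hub = 10/3
    \<and> partial_mean_hitting_time (rose_nodes m) (nbcrw (rose_nodes m) (rose_adj m) v) hub
        = 4/3 + 2 * sqrt (2 * real m - 1) / real m
    \<and> partial_mean_hitting_time (rose_nodes m) (nbcrw (rose_nodes m) (rose_adj m) v) hub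
        = 4/3 + 2 * sqrt (6 * real (3*m+1) - 15) / (real (3*m+1) - 1)
    \<and> partial_mean_hitting_time (rose_nodes m) (merw (rose_nodes m) (rose_adj m) \<psi>) hub
        = 4/3 + 2 / real m
    \<and> partial_mean_hitting_time (rose_nodes m) (merw (rose_nodes m) (rose_adj m) \<psi>) hub
        = 4/3 + 6 / (real (3*m+1) - 1)"
proof -
  have T: "partial_mean_hitting_time (rose_nodes m) (turw (rose_nodes m) (rose_adj m)) hub = 10/3"
    using m2 by (intro turw_partial_mean_hitting_time) simp
  have N: "partial_mean_hitting_time (rose_nodes m) (nbcrw (rose_nodes m) (rose_adj m) v) hub
      = 4/3 + 2 * sqrt (2 * real m - 1) / real m"
    by (rule nbcrw_partial_mean_hitting_time[OF m2 v_nonneg v_nonzero v_eig])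
  have M: "partial_mean_hitting_time (rose_nodes m) (merw (rose_nodes m) (rose_adj m) \<psi>) hub
      = 4/3 + 2 / real m"
    using m2 psi_pos psi_eig by (intro merw_partial_mean_hitting_time) simp_all
  have "sqrt (6 * real (3*m+1) - 15) = 3 * sqrt (2 * real m - 1)"
    using real_sqrt_mult[of 9 "2 * real m - 1"] by (simp add: algebra_simps)
  moreover have "real (3*m+1) - 1 = 3 * real m"
    by simp
  ultimately show ?thesis
    using T N M m2 by simp
qed

end
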